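(* Let $m\ge1$, let $k_1,k_2\ge0$ be integers and $r_1,r_2>0$ with $r_1^2+r_2^2=1$. Let $F_1:\mathbb{R}^{m+1}\to\mathbb{R}^{n_1+1}$ and $F_2:\mathbb{R}^{m+1}\to\mathbb{R}^{n_2+1}$ be forms of degrees $k_1$, $k_2$ with $|F_i(\bar x)|^2=r_i^2|\bar x|^{2k_i}$, restricting to $\varphi_1:\mathbb{S}^m\to\mathbb{S}^{n_1}(r_1)$ and $\varphi_2:\mathbb{S}^m\to\mathbb{S}^{n_2}(r_2)$, and let $\varphi=\iota\circ(\varphi_1,\varphi_2):\mathbb{S}^m\to\mathbb{S}^{n_1+n_2+1}$, where $\iota$ is the canonical inclusion of $\mathbb{S}^{n_1}(r_1)\times\mathbb{S}^{n_2}(r_2)$ into $\mathbb{S}^{n_1+n_2+1}$. If $\Delta^0F_1=0$ and $\Delta^0F_2=0$, then $\varphi$ is harmonic if and only if $k_1=k_2$.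
   Context: A form of degree $k$ is a map all of whose components are homogeneous polynomials of degree $k$. $\Delta^0=-\sum_i\partial^2/\partial(x^i)^2$ on $\mathbb{R}^{m+1}$, applied componentwise. $\mathbb{S}^n(r)$ is the sphere of radius $r$ centred at $0$, $\mathbb{S}^m=\mathbb{S}^m(1)$. Harmonic means vanishing tension field $\tau(\varphi)=\operatorname{trace}\nabla d\varphi$. *)

theory Defs
  imports "HOL-Analysis.Analysis"
begin

definition multi_idx :: "nat \<Rightarrow> ('m::finite \<Rightarrow> nat) set" where
  "multi_idx k = {\<alpha>. sum \<alpha> UNIV = k}"

definition is_form :: "nat \<Rightarrow> (real^'m::finite \<Rightarrow> real^'n::finite) \<Rightarrow> bool" where
  "is_form k F \<longleftrightarrow> (\<forall>j. \<exists>c :: ('m \<Rightarrow> nat) \<Rightarrow> real.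
      \<forall>x. F x $ j = (\<Sum>\<alpha>\<in>multi_idx k. c \<alpha> * (\<Prod>i\<in>UNIV. (x $ i) ^ (\<alpha> i))))"

definition partial2 :: "(real^'m::finite \<Rightarrow> real) \<Rightarrow> 'm \<Rightarrow> real^'m \<Rightarrow> real" where
  "partial2 f i x = deriv (deriv (\<lambda>t. f (x + t *\<^sub>R axis i 1))) 0"

definition Delta0 :: "(real^'m::finite \<Rightarrow> real^'n::finite) \<Rightarrow> real^'m \<Rightarrow> real^'n" where
  "Delta0 F x = (\<chi> j. - (\<Sum>i\<in>UNIV. partial2 (\<lambda>y. F y $ j) i x))"

definition trace_hess :: "(real^'m::finite \<Rightarrow> 'b::euclidean_space) \<Rightarrow> real^'m \<Rightarrow> 'b" where
  "trace_hess \<Phi> x = (\<Sum>b\<in>Basis. (\<Sum>i\<in>UNIV. partial2 (\<lambda>y. \<Phi> y \<bullet> b) i x) *\<^sub>R b)"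

text \<open>Tension field of a map phi from the unit sphere S^m (in R^{m+1} = real^'m) into the unit
  sphere of 'b. The Laplace-Beltrami operator of S^m (applied componentwise, i.e. trace of
  nabla d phi regarded as a map into the ambient space) is computed as the Euclidean Laplacian of
  the degree-0 homogeneous extension y |-> phi (y / |y|); the tension field is its
  projection onto the tangent space of the target sphere at phi x.\<close>
definition tension :: "(real^'m::finite \<Rightarrow> 'b::euclidean_space) \<Rightarrow> real^'m \<Rightarrow> 'b" where
  "tension \<phi> x = (let L = trace_hess (\<lambda>y. \<phi> (y /\<^sub>R norm y)) x in L - (L \<bullet> \<phi> x) *\<^sub>R \<phi> x)"

definition harmonic_sphere_map :: "(real^'m::finite \<Rightarrow> 'b::euclidean_space) \<Rightarrow> bool" where
  "harmonic_sphere_map \<phi> \<longleftrightarrow> (\<forall>x \<in> sphere 0 1. tension \<phi> x = 0)"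

end

theory Submission
  imports Defs "HOL-Computational_Algebra.Polynomial"
begin

text \<open>A harmonic form \<open>F\<close> of degree \<open>k\<close> restricts to an eigenmap of \<open>S\<^sup>m\<close>: differentiating
  \<open>F (y / |y|)\<close> twice along the coordinate lines and using Euler's identity
  \<open>\<Sum>\<^sub>l x\<^sub>l \<partial>\<^sub>l F = k F\<close> together with \<open>\<Delta>\<^sup>0 F = 0\<close>, its Euclidean Laplacian at a unit vector is
  \<open>-\<lambda>\<^sub>k F\<close> with \<open>\<lambda>\<^sub>k = k (k + m - 1)\<close>. Hence the Laplacian of \<open>\<phi> = (\<phi>\<^sub>1, \<phi>\<^sub>2)\<close> is
  \<open>(-\<lambda>\<^sub>k\<^sub>1 \<phi>\<^sub>1, -\<lambda>\<^sub>k\<^sub>2 \<phi>\<^sub>2)\<close>; removing its component along \<open>\<phi>\<close> leaves the tension field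
  \<open>((\<lambda>\<^sub>k\<^sub>2 - \<lambda>\<^sub>k\<^sub>1) r\<^sub>2\<^sup>2 \<phi>\<^sub>1, (\<lambda>\<^sub>k\<^sub>1 - \<lambda>\<^sub>k\<^sub>2) r\<^sub>1\<^sup>2 \<phi>\<^sub>2)\<close>, which vanishes iff
  \<open>\<lambda>\<^sub>k\<^sub>1 = \<lambda>\<^sub>k\<^sub>2\<close>, i.e. iff \<open>k\<^sub>1 = k\<^sub>2\<close>, since \<open>k \<mapsto> k (k + m - 1)\<close> is injective for \<open>m \<ge> 1\<close>.\<close>

definition homogeneous_polynomial :: "nat \<Rightarrow> (real^'m::finite \<Rightarrow> real) \<Rightarrow> bool" where
  "homogeneous_polynomial k f \<longleftrightarrow>
    (\<exists>c. \<forall>y. f y = (\<Sum>\<alpha>\<in>multi_idx k. c \<alpha> * (\<Prod>i\<in>UNIV. (y $ i) ^ \<alpha> i)))"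

lemma is_form_iff_components:
  "is_form k F \<longleftrightarrow> (\<forall>j. homogeneous_polynomial k (\<lambda>y. F y $ j))"
  by (simp add: is_form_def homogeneous_polynomial_def)

lemma finite_multi_idx: "finite (multi_idx k :: ('m::finite \<Rightarrow> nat) set)"
proof (rule finite_subset)
  show "multi_idx k \<subseteq> (UNIV::'m set) \<rightarrow>\<^sub>E {..k}"
    by (auto simp: multi_idx_def PiE_def extensional_def intro!: member_le_sum)
qed (simp add: finite_PiE)

lemma homogeneous_polynomial_scaleR:
  assumes "homogeneous_polynomial k f"
  shows "f (s *\<^sub>R y) = s ^ k * f y"
proof -
  obtain c where f: "\<And>y. f y = (\<Sum>\<alpha>\<in>multi_idx k. c \<alpha> * (\<Prod>i\<in>UNIV. (y $ i) ^ \<alpha> i))"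
    using assms unfolding homogeneous_polynomial_def by blast
  have monomial: "(\<Prod>i\<in>UNIV. ((s *\<^sub>R y) $ i) ^ \<alpha> i) = s ^ k * (\<Prod>i\<in>UNIV. (y $ i) ^ \<alpha> i)"
    if "\<alpha> \<in> multi_idx k" for \<alpha>
  proof -
    have "(\<Prod>i\<in>UNIV. ((s *\<^sub>R y) $ i) ^ \<alpha> i) = (\<Prod>i\<in>UNIV. s ^ \<alpha> i) * (\<Prod>i\<in>UNIV. (y $ i) ^ \<alpha> i)"
      by (simp add: power_mult_distrib prod.distrib)
    also have "(\<Prod>i\<in>UNIV. s ^ \<alpha> i) = s ^ k"
      using that by (simp add: multi_idx_def flip: power_sum)
    finally show ?thesis .
  qed
  have "f (s *\<^sub>R y) = (\<Sum>\<alpha>\<in>multi_idx k. c \<alpha> * (s ^ k * (\<Prod>i\<in>UNIV. (y $ i) ^ \<alpha> i)))"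
    unfolding f by (intro sum.cong refl) (simp only: monomial)
  then show ?thesis
    by (simp add: f sum_distrib_left mult_ac)
qed

lemma homogeneous_polynomial_normalize:
  assumes "homogeneous_polynomial k f" and "y \<noteq> 0"
  shows "f (y /\<^sub>R norm y) = ((norm y)\<^sup>2) powr (- real k / 2) * f y"
proof -
  have "((norm y)\<^sup>2) powr (- real k / 2) = (norm y powr 2) powr (- real k / 2)"
    using assms(2) by (simp add: powr_realpow)
  also have "\<dots> = inverse (norm y) ^ k"
    using assms(2) by (subst powr_powr) (simp add: powr_minus powr_realpow power_inverse)
  finally show ?thesis
    using homogeneous_polynomial_scaleR[OF assms(1)] by simp
qed

lemma homogeneous_polynomial_on_line:
  assumes "homogeneous_polynomial k f"
  obtains p where "\<And>t. f (x + t *\<^sub>R v) = poly p t"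
proof -
  obtain c where f: "\<And>y. f y = (\<Sum>\<alpha>\<in>multi_idx k. c \<alpha> * (\<Prod>i\<in>UNIV. (y $ i) ^ \<alpha> i))"
    using assms unfolding homogeneous_polynomial_def by blast
  show thesis
    by (rule that[of "\<Sum>\<alpha>\<in>multi_idx k. smult (c \<alpha>) (\<Prod>i\<in>UNIV. [:x $ i, v $ i:] ^ \<alpha> i)"])
      (simp add: f poly_sum poly_prod mult_ac)
qed

lemma homogeneous_polynomial_differentiable:
  assumes "homogeneous_polynomial k f"
  shows "f differentiable (at x)"
proof -
  obtain c where f: "f = (\<lambda>y. \<Sum>\<alpha>\<in>multi_idx k. c \<alpha> * (\<Prod>i\<in>UNIV. (y $ i) ^ \<alpha> i))"
    using assms unfolding homogeneous_polynomial_def by blast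
  have "(\<lambda>y::real^'a. \<Prod>i\<in>UNIV. (y $ i) ^ \<alpha> i) differentiable (at x)" for \<alpha> :: "'a \<Rightarrow> nat"
  proof -
    have factor: "((\<lambda>y::real^'a. (y $ i) ^ \<alpha> i) has_derivative
        (\<lambda>h. of_nat (\<alpha> i) * (x $ i) ^ (\<alpha> i - 1) * h $ i)) (at x)" for i
      by (auto intro!: derivative_eq_intros bounded_linear_imp_has_derivative)
    show ?thesis
      unfolding differentiable_def
      by (rule exI, rule has_derivative_prod[where f = "\<lambda>i y. (y $ i) ^ \<alpha> i"], rule factor)
  qed
  then show ?thesis
    unfolding f by (intro differentiable_sum differentiable_mult differentiable_const finite_multi_idx) auto
qed

lemma has_real_derivative_along_line:
  assumes "(f has_derivative D) (at x)"
  shows "((\<lambda>t. f (x + t *\<^sub>R v)) has_real_derivative D v) (at 0)"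
proof -
  have "((\<lambda>t. f (x + t *\<^sub>R v)) has_derivative (\<lambda>t. D (t *\<^sub>R v))) (at 0)"
    using assms
    by (auto intro!: derivative_eq_intros has_derivative_compose[of "\<lambda>t. x + t *\<^sub>R v" _ _ _ f])
  moreover have "(\<lambda>t. D (t *\<^sub>R v)) = (*) (D v)"
    using linear_scale[OF has_derivative_linear[OF assms]] by auto
  ultimately show ?thesis
    unfolding has_field_derivative_def by simp
qed

definition partial :: "(real^'m::finite \<Rightarrow> real) \<Rightarrow> 'm \<Rightarrow> real^'m \<Rightarrow> real" where
  "partial f i x = deriv (\<lambda>t. f (x + t *\<^sub>R axis i 1)) 0"

lemma homogeneous_polynomial_euler:
  assumes f: "homogeneous_polynomial k f"
  shows "(\<Sum>l\<in>UNIV. x $ l * partial f l x) = real k * f x"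
proof -
  obtain D where D: "(f has_derivative D) (at x)"
    using homogeneous_polynomial_differentiable[OF f] unfolding differentiable_def by blast
  have "D x = D (\<Sum>l\<in>UNIV. x $ l *\<^sub>R axis l 1)"
    by (metis (no_types) basis_expansion scalar_mult_eq_scaleR)
  also have "\<dots> = (\<Sum>l\<in>UNIV. x $ l * partial f l x)"
    using has_derivative_linear[OF D]
    by (simp add: linear_sum linear_scale partial_def
        DERIV_imp_deriv[OF has_real_derivative_along_line[OF D]])
  finally have "D x = (\<Sum>l\<in>UNIV. x $ l * partial f l x)" .
  moreover have "D x = real k * f x"
  proof (rule DERIV_unique[OF has_real_derivative_along_line[OF D, of x]])
    have "f (x + t *\<^sub>R x) = (1 + t) ^ k * f x" for t
      using homogeneous_polynomial_scaleR[OF f, of "1 + t" x] by (simp add: algebra_simps)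
    then show "((\<lambda>t. f (x + t *\<^sub>R x)) has_real_derivative real k * f x) (at 0)"
      by (auto intro!: derivative_eq_intros)
  qed
  ultimately show ?thesis by simp
qed

lemma deriv2_eqI:
  assumes "open S" "x \<in> S"
    and "\<And>t. t \<in> S \<Longrightarrow> (f has_real_derivative f' t) (at t)"
    and "(f' has_real_derivative d) (at x)"
  shows "deriv (deriv f) x = d"
proof -
  have "eventually (\<lambda>t. deriv f t = f' t) (nhds x)"
    using eventually_nhds_in_open[OF assms(1,2)]
    by (rule eventually_mono) (simp add: assms(3) DERIV_imp_deriv)
  then have "deriv (deriv f) x = deriv f' x" by (rule deriv_cong_ev) simp
  with assms(4) show ?thesis by (simp add: DERIV_imp_deriv)
qed

text \<open>If \<open>|x| = 1\<close> then \<open>|x + t e\<^sub>l|\<^sup>2 = 1 + 2 x\<^sub>l t + t\<^sup>2\<close>, so along a coordinate line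
  the degree-0 extension of a form of degree \<open>k\<close> has this shape with \<open>c = -k/2\<close>.\<close>

lemma deriv2_quadratic_powr_mult_poly:
  fixes a c :: real and p :: "real poly"
  defines "q \<equiv> \<lambda>t. 1 + 2*a*t + t\<^sup>2"
  assumes "open S" "0 \<in> S" "\<And>t. t \<in> S \<Longrightarrow> q t > 0"
    and "\<And>t. t \<in> S \<Longrightarrow> g t = q t powr c * poly p t"
  shows "deriv (deriv g) 0 = c * (4*(c - 1)*a\<^sup>2 + 2) * poly p 0
      + 4*c*a * poly (pderiv p) 0 + poly (pderiv (pderiv p)) 0"
proof (rule deriv2_eqI[OF assms(2,3)])
  define g' where "g' t = c * q t powr (c - 1) * (2*a + 2*t) * poly p t
      + q t powr c * poly (pderiv p) t" for t
  show "(g has_real_derivative g' t) (at t)" if "t \<in> S" for t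
  proof (rule has_field_derivative_transform_within_open[OF _ assms(2) that])
    show "((\<lambda>t. q t powr c * poly p t) has_real_derivative g' t) (at t)"
      using assms(4)[OF that] unfolding q_def g'_def
      by (auto intro!: derivative_eq_intros simp: algebra_simps)
  qed (simp add: assms(5))
  have "q 0 = 1" by (simp add: q_def)
  then show "(g' has_real_derivative c * (4*(c - 1)*a\<^sup>2 + 2) * poly p 0
      + 4*c*a * poly (pderiv p) 0 + poly (pderiv (pderiv p)) 0) (at 0)"
    unfolding g'_def[abs_def] unfolding q_def
    by (auto intro!: derivative_eq_intros simp: algebra_simps power2_eq_square)
qed

lemma partial2_radial_extension:
  assumes f: "homogeneous_polynomial k f" and x: "norm x = 1"
  shows "partial2 (\<lambda>y. f (y /\<^sub>R norm y)) l x =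
    (real k * (real k + 2) * (x $ l)\<^sup>2 - real k) * f x
    - 2 * real k * x $ l * partial f l x + partial2 f l x"
proof -
  define e :: "real^'a" where "e = axis l 1"
  define a where "a = x $ l"
  define q where "q t = 1 + 2*a*t + t\<^sup>2" for t
  obtain p where p: "\<And>t. f (x + t *\<^sub>R e) = poly p t"
    using homogeneous_polynomial_on_line[OF f, of x e] by blast
  have norm_line: "(norm (x + t *\<^sub>R e))\<^sup>2 = q t" for t
  proof -
    have "(norm (x + t *\<^sub>R e))\<^sup>2 = (norm x)\<^sup>2 + 2 * t * (x \<bullet> e) + t\<^sup>2 * (norm e)\<^sup>2"
      unfolding power2_norm_eq_inner
      by (simp add: inner_add_left inner_add_right inner_commute algebra_simps power2_eq_square)
    then show ?thesis
      using x by (simp add: q_def a_def e_def cart_eq_inner_axis)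
  qed
  define S where "S = {t. x + t *\<^sub>R e \<noteq> 0}"
  have radial_on_line:
    "f ((x + t *\<^sub>R e) /\<^sub>R norm (x + t *\<^sub>R e)) = q t powr (- real k / 2) * poly p t"
    if "t \<in> S" for t
    using homogeneous_polynomial_normalize[OF f] that by (simp add: S_def norm_line p)
  have q_pos: "q t > 0" if "t \<in> S" for t
    using that by (simp add: S_def flip: norm_line)
  have "open S"
    unfolding S_def by (intro open_Collect_neq continuous_intros)
  moreover have "0 \<in> S"
    using x by (auto simp: S_def)
  ultimately have radial: "partial2 (\<lambda>y. f (y /\<^sub>R norm y)) l x =
      - real k / 2 * (4 * (- real k / 2 - 1) * a\<^sup>2 + 2) * poly p 0
      + 4 * (- real k / 2) * a * poly (pderiv p) 0 + poly (pderiv (pderiv p)) 0"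
    unfolding partial2_def e_def[symmetric] q_def
    by (rule deriv2_quadratic_powr_mult_poly) (use radial_on_line q_pos q_def in auto)
  have "(\<lambda>t. f (x + t *\<^sub>R e)) = poly p"
    using p by auto
  moreover have "deriv (poly r) = poly (pderiv r)" for r :: "real poly"
    by (simp add: DERIV_imp_deriv fun_eq_iff)
  ultimately have "poly p 0 = f x" "poly (pderiv p) 0 = partial f l x"
      "poly (pderiv (pderiv p)) 0 = partial2 f l x"
    unfolding partial_def partial2_def e_def[symmetric] by (simp_all flip: p)
  with radial show ?thesis
    by (simp add: a_def field_simps power2_eq_square)
qed

text \<open>With \<open>n = m + 1\<close> the dimension of the ambient space, this is the eigenvalue
  \<open>k (k + m - 1)\<close> of the Laplacian of \<open>S\<^sup>m\<close> on restrictions of harmonic forms of degree \<open>k\<close>.\<close>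
definition sphere_eigenvalue :: "nat \<Rightarrow> nat \<Rightarrow> real" where
  "sphere_eigenvalue n k = real k * (real k + real n - 2)"

lemma sphere_eigenvalue_eq_iff:
  assumes "n \<ge> 2"
  shows "sphere_eigenvalue n k1 = sphere_eigenvalue n k2 \<longleftrightarrow> k1 = k2"
proof
  assume "sphere_eigenvalue n k1 = sphere_eigenvalue n k2"
  then have "(real k2 - real k1) * (real k1 + real k2 + real n - 2) = 0"
    unfolding sphere_eigenvalue_def by (simp add: algebra_simps)
  with assms show "k1 = k2" by auto
qed simp

lemma laplacian_radial_extension:
  fixes x :: "real^'m::finite"
  assumes f: "homogeneous_polynomial k f" and x: "norm x = 1"
    and harmonic: "(\<Sum>l\<in>UNIV. partial2 f l x) = 0"
  shows "(\<Sum>l\<in>UNIV. partial2 (\<lambda>y. f (y /\<^sub>R norm y)) l x)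
    = - sphere_eigenvalue CARD('m) k * f x"
proof -
  have "(\<Sum>l\<in>UNIV. partial2 (\<lambda>y. f (y /\<^sub>R norm y)) l x)
      = (real k * (real k + 2) * (\<Sum>l\<in>UNIV. (x $ l)\<^sup>2) - real k * real CARD('m)) * f x
        - 2 * real k * (\<Sum>l\<in>UNIV. x $ l * partial f l x) + (\<Sum>l\<in>UNIV. partial2 f l x)"
    by (simp add: partial2_radial_extension[OF f x] sum.distrib sum_subtractf
        sum_distrib_left sum_distrib_right algebra_simps)
  also have "(\<Sum>l\<in>UNIV. (x $ l)\<^sup>2) = 1"
    using x by (simp add: norm_eq_1 inner_vec_def power2_eq_square)
  also have "(\<Sum>l\<in>UNIV. x $ l * partial f l x) = real k * f x"
    by (rule homogeneous_polynomial_euler[OF f])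
  finally show ?thesis
    using harmonic by (simp add: sphere_eigenvalue_def algebra_simps)
qed

lemma inner_Basis_trace_hess:
  assumes "b \<in> Basis"
  shows "trace_hess \<Phi> x \<bullet> b = (\<Sum>i\<in>UNIV. partial2 (\<lambda>y. \<Phi> y \<bullet> b) i x)"
  using assms unfolding trace_hess_def
  by (simp add: inner_sum_left inner_Basis if_distrib sum.delta cong: if_cong)

lemma trace_hess_pair:
  fixes \<Phi> :: "real^'m::finite \<Rightarrow> 'a::euclidean_space" and \<Psi> :: "real^'m \<Rightarrow> 'b::euclidean_space"
  shows "trace_hess (\<lambda>y. (\<Phi> y, \<Psi> y)) x = (trace_hess \<Phi> x, trace_hess \<Psi> x)"
proof (rule euclidean_eqI)
  fix b :: "'a \<times> 'b" assume "b \<in> Basis"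
  then consider u where "u \<in> Basis" "b = (u, 0)" | v where "v \<in> Basis" "b = (0, v)"
    unfolding Basis_prod_def by auto
  then show "trace_hess (\<lambda>y. (\<Phi> y, \<Psi> y)) x \<bullet> b = (trace_hess \<Phi> x, trace_hess \<Psi> x) \<bullet> b"
    unfolding inner_Basis_trace_hess[OF \<open>b \<in> Basis\<close>]
    by cases (simp_all add: inner_Basis_trace_hess)
qed

lemma trace_hess_radial_form:
  fixes F :: "real^'m::finite \<Rightarrow> real^'n::finite"
  assumes F: "is_form k F" and harmonic: "\<forall>x. Delta0 F x = 0" and x: "norm x = 1"
  shows "trace_hess (\<lambda>y. F (y /\<^sub>R norm y)) x = - sphere_eigenvalue CARD('m) k *\<^sub>R F x"
proof (rule euclidean_eqI)
  fix b :: "real^'n" assume "b \<in> Basis"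
  then obtain j where b: "b = axis j 1"
    unfolding Basis_vec_def by auto
  have "homogeneous_polynomial k (\<lambda>y. F y $ j)"
    using F by (simp add: is_form_iff_components)
  moreover have "(\<Sum>i\<in>UNIV. partial2 (\<lambda>y. F y $ j) i x) = 0"
    using harmonic by (simp add: Delta0_def vec_eq_iff)
  ultimately have "(\<Sum>i\<in>UNIV. partial2 (\<lambda>y. F (y /\<^sub>R norm y) $ j) i x)
      = - sphere_eigenvalue CARD('m) k * F x $ j"
    by (rule laplacian_radial_extension[OF _ x])
  then show "trace_hess (\<lambda>y. F (y /\<^sub>R norm y)) x \<bullet> b = (- sphere_eigenvalue CARD('m) k *\<^sub>R F x) \<bullet> b"
    using \<open>b \<in> Basis\<close> by (simp add: inner_Basis_trace_hess b cart_eq_inner_axis)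
qed

lemma tension_pair_of_eigenmaps:
  fixes \<phi>1 :: "real^'m::finite \<Rightarrow> 'a::euclidean_space" and \<phi>2 :: "real^'m \<Rightarrow> 'b::euclidean_space"
  assumes "trace_hess (\<lambda>y. \<phi>1 (y /\<^sub>R norm y)) x = - \<mu>1 *\<^sub>R \<phi>1 x"
    and "trace_hess (\<lambda>y. \<phi>2 (y /\<^sub>R norm y)) x = - \<mu>2 *\<^sub>R \<phi>2 x"
    and "(norm (\<phi>1 x))\<^sup>2 = r1\<^sup>2" "(norm (\<phi>2 x))\<^sup>2 = r2\<^sup>2" "r1\<^sup>2 + r2\<^sup>2 = 1"
  shows "tension (\<lambda>y. (\<phi>1 y, \<phi>2 y)) x = (((\<mu>2 - \<mu>1) * r2\<^sup>2) *\<^sub>R \<phi>1 x, ((\<mu>1 - \<mu>2) * r1\<^sup>2) *\<^sub>R \<phi>2 x)"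
proof -
  define c where "c = - \<mu>1 * r1\<^sup>2 - \<mu>2 * r2\<^sup>2"
  have normal_part: "(- \<mu>1 *\<^sub>R \<phi>1 x, - \<mu>2 *\<^sub>R \<phi>2 x) \<bullet> (\<phi>1 x, \<phi>2 x) = c"
    using assms(3,4) by (simp add: c_def flip: power2_norm_eq_inner)
  have coeffs: "- \<mu>1 - c = (\<mu>2 - \<mu>1) * r2\<^sup>2" "- \<mu>2 - c = (\<mu>1 - \<mu>2) * r1\<^sup>2"
    using assms(5) unfolding c_def by algebra+
  show ?thesis
    unfolding tension_def Let_def trace_hess_pair assms(1,2) normal_part coeffs[symmetric]
    by (simp add: scaleR_diff_left)
qed

lemma tension_pair_of_eigenmaps_eq_0_iff:
  fixes \<phi>1 :: "real^'m::finite \<Rightarrow> 'a::euclidean_space" and \<phi>2 :: "real^'m \<Rightarrow> 'b::euclidean_space"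
  assumes "trace_hess (\<lambda>y. \<phi>1 (y /\<^sub>R norm y)) x = - \<mu>1 *\<^sub>R \<phi>1 x"
    and "trace_hess (\<lambda>y. \<phi>2 (y /\<^sub>R norm y)) x = - \<mu>2 *\<^sub>R \<phi>2 x"
    and "(norm (\<phi>1 x))\<^sup>2 = r1\<^sup>2" "(norm (\<phi>2 x))\<^sup>2 = r2\<^sup>2" "r1\<^sup>2 + r2\<^sup>2 = 1"
    and "r1 > 0" "r2 > 0"
  shows "tension (\<lambda>y. (\<phi>1 y, \<phi>2 y)) x = 0 \<longleftrightarrow> \<mu>1 = \<mu>2"
proof -
  have "\<phi>1 x \<noteq> 0" "\<phi>2 x \<noteq> 0"
    using assms(3,4,6,7) by auto
  then show ?thesis
    unfolding tension_pair_of_eigenmaps[OF assms(1-5)] using assms(6,7)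
    by (auto simp: zero_prod_def)
qed

theorem mainTheorem4:
  fixes F1 :: "real^'m::finite \<Rightarrow> real^'a::finite"
    and F2 :: "real^'m \<Rightarrow> real^'b::finite"
    and k1 k2 :: nat and r1 r2 :: real
  assumes m: "CARD('m) \<ge> 2"
    and r: "r1 > 0" "r2 > 0" "r1\<^sup>2 + r2\<^sup>2 = 1"
    and F1: "is_form k1 F1" "\<forall>x. (norm (F1 x))\<^sup>2 = r1\<^sup>2 * norm x ^ (2 * k1)"
    and F2: "is_form k2 F2" "\<forall>x. (norm (F2 x))\<^sup>2 = r2\<^sup>2 * norm x ^ (2 * k2)"
    and harm1: "\<forall>x. Delta0 F1 x = 0"
    and harm2: "\<forall>x. Delta0 F2 x = 0"
  shows "harmonic_sphere_map (\<lambda>x. (F1 x, F2 x)) \<longleftrightarrow> k1 = k2"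
proof -
  have tension_eq_0_iff: "tension (\<lambda>x. (F1 x, F2 x)) x = 0 \<longleftrightarrow> k1 = k2" if x: "norm x = 1" for x
  proof -
    have "(norm (F1 x))\<^sup>2 = r1\<^sup>2" "(norm (F2 x))\<^sup>2 = r2\<^sup>2"
      using F1(2) F2(2) x by simp_all
    then have "tension (\<lambda>x. (F1 x, F2 x)) x = 0
        \<longleftrightarrow> sphere_eigenvalue CARD('m) k1 = sphere_eigenvalue CARD('m) k2"
      by (rule tension_pair_of_eigenmaps_eq_0_iff[OF trace_hess_radial_form[OF F1(1) harm1 x]
            trace_hess_radial_form[OF F2(1) harm2 x] _ _ r(3,1,2)])
    with sphere_eigenvalue_eq_iff[OF m] show ?thesis by simp
  qed
  obtain x0 :: "real^'m" where "norm x0 = 1"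
    using vector_choose_size[of 1] by auto
  then show ?thesis
    unfolding harmonic_sphere_map_def using tension_eq_0_iff by auto
qed

end
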